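(* Assume $\mu\in\mathcal P_{ac}(\mathbb R^p)$ and that no two of the reference points $\mathbf h_1,\dots,\mathbf h_n$ lie on the same orbit of $\mathcal G$. Then: (1) the generalized ranks $R_n(\mathbf X_1),\dots,R_n(\mathbf X_n)$ and the generalized signed-ranks $S_n(\mathbf X_1)R_n(\mathbf X_1),\dots,S_n(\mathbf X_n)R_n(\mathbf X_n)$ are almost surely uniquely determined (i.e. the optimal permutation $\hat\sigma$ is a.s. unique and, for each $i$, the point of the orbit $\mathcal G R_n(\mathbf X_i)$ closest to $\mathbf X_i$ is a.s. unique); (2) if moreover $\mathbf h_1,\dots,\mathbf h_n\in B$ for some $B\subset\mathbb R^p$ such that $\mathcal G$ acts freely on $\mathcal G B$, then the generalized signs $S_n(\mathbf X_1),\dots,S_n(\mathbf X_n)$ are almost surely uniquely determined.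
   Context: Let $p\ge1$ and let $\mathcal G$ be a compact subgroup of the orthogonal group $\mathrm O(p)$ (the $p\times p$ real orthogonal matrices under matrix multiplication). $\mathcal P_{ac}(\mathbb R^p)$ denotes the set of Borel probability measures on $\mathbb R^p$ having a Lebesgue density. For $\mathbf x\in\mathbb R^p$ its orbit is $\mathcal G\mathbf x=\{Q\mathbf x:Q\in\mathcal G\}$; for $B\subset\mathbb R^p$, $\mathcal G B=\{Q\mathbf x:Q\in\mathcal G,\mathbf x\in B\}$. $\mathcal G$ acts freely on $\mathcal G B$ if for every $\mathbf y\in B$ and $Q\in\mathcal G$, $Q\mathbf y=\mathbf y$ implies $Q=I$. Let $\mathbf X_1,\dots,\mathbf X_n$ be i.i.d. from $\mu$, and let $\mathbf h_1,\dots,\mathbf h_n\in\mathbb R^p$ be fixed (non-random) reference points. Let $c(\mathbf x,\mathbf h)=\min_{Q\in\mathcal G}\|Q^\top\mathbf x-\mathbf h\|^2$. Let $(\{\hat Q_i\}_{i=1}^n,\hat\sigma)$ be a minimizer of $\sum_{i=1}^n\|Q_i^\top\mathbf X_{\sigma(i)}-\mathbf h_i\|^2$ over $Q_1,\dots,Q_n\in\mathcal G$ and permutations $\sigma$ of $\{1,\dots,n\}$ (equivalently $\hat\sigma$ minimizes $\sum_i c(\mathbf X_{\sigma(i)},\mathbf h_i)$ and $\hat Q_i$ minimizes $Q\mapsto \|Q^\top\mathbf X_{\hat\sigma(i)}-\mathbf h_i\|^2$). The generalized sign, rank and signed-rank of $\mathbf X_i$ are $S_n(\mathbf X_i)=\hat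 Q_{\hat\sigma^{-1}(i)}$, $R_n(\mathbf X_i)=\mathbf h_{\hat\sigma^{-1}(i)}$ and $S_n(\mathbf X_i)R_n(\mathbf X_i)$. *)

theory Defs
  imports "HOL-Probability.Probability"
begin

definition compact_orth_subgroup :: "(real^'p^'p) set \<Rightarrow> bool" where
  "compact_orth_subgroup G \<longleftrightarrow>
     compact G \<and> (\<forall>Q\<in>G. orthogonal_matrix Q) \<and> mat 1 \<in> G \<and>
     (\<forall>Q\<in>G. \<forall>R\<in>G. Q ** R \<in> G) \<and> (\<forall>Q\<in>G. transpose Q \<in> G)"

definition orbit :: "(real^'p^'p) set \<Rightarrow> real^'p \<Rightarrow> (real^'p) set" where
  "orbit G x = (\<lambda>Q. Q *v x) ` G"

definition gcost :: "(real^'p^'p) set \<Rightarrow> real^'p \<Rightarrow> real^'p \<Rightarrow> real" where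
  "gcost G x h = (INF Q\<in>G. (norm (transpose Q *v x - h))\<^sup>2)"

definition optimal_perm ::
  "(real^'p^'p) set \<Rightarrow> nat \<Rightarrow> (nat \<Rightarrow> real^'p) \<Rightarrow> (nat \<Rightarrow> real^'p) \<Rightarrow> (nat \<Rightarrow> nat) \<Rightarrow> bool" where
  "optimal_perm G n X h \<sigma> \<longleftrightarrow> \<sigma> permutes {..<n} \<and>
     (\<forall>\<tau>. \<tau> permutes {..<n} \<longrightarrow>
        (\<Sum>i<n. gcost G (X (\<sigma> i)) (h i)) \<le> (\<Sum>i<n. gcost G (X (\<tau> i)) (h i)))"

definition has_lebesgue_density :: "(real^'p) measure \<Rightarrow> bool" where
  "has_lebesgue_density \<mu> \<longleftrightarrow> (\<exists>f\<in>borel_measurable lborel. \<mu> = density lborel f)"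

end

theory Submission
  imports Defs
begin

text \<open>
  Since the orbit \<open>G h\<close> lies on a sphere, \<open>c(x, h) = |x|\<^sup>2 - 2 max {x \<bullet> y | y \<in> G h} + |h|\<^sup>2\<close>,
  and the points of \<open>G h\<close> nearest to \<open>x\<close> are the maximisers of \<open>x \<bullet> y\<close> over \<open>G h\<close>. Everything
  therefore rests on one geometric fact: for compact \<open>S, T\<close> and a constant \<open>c\<close>, the set of \<open>x\<close>
  admitting maximisers \<open>y\<^sub>S \<noteq> y\<^sub>T\<close> of \<open>x \<bullet> -\<close> over \<open>S\<close> and \<open>T\<close> with \<open>x \<bullet> y\<^sub>S - x \<bullet> y\<^sub>T = c\<close> is
  Lebesgue null. Indeed, if \<open>e \<bullet> y\<^sub>S < e \<bullet> y\<^sub>T\<close>, then along every line \<open>x + t e\<close> the intervals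
  \<open>(e \<bullet> y\<^sub>S, e \<bullet> y\<^sub>T)\<close> belonging to different parameters \<open>t\<close> are disjoint, so each line meets the
  set in a countable set, and Fubini applies.

  With \<open>S = T\<close> an orbit and \<open>c = 0\<close> this gives a.s. uniqueness of the nearest orbit point, and
  hence of the sign when the action is free. For permutations \<open>\<sigma> \<noteq> \<tau>\<close>, some observation \<open>X\<^sub>k\<close>
  is matched to references on two different orbits; with the other observations fixed, the two
  total costs agree only if \<open>X\<^sub>k\<close> lies in such a null set. So a.s. all total costs differ, and
  the optimal permutation is unique.
\<close>

section \<open>Null sets detected on lines\<close>

lemma countable_if_disjoint_intervals:
  fixes T :: "real set" and a b :: "real \<Rightarrow> real"
  assumes nonempty: "\<And>t. t \<in> T \<Longrightarrow> a t < b t"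
    and ordered: "\<And>t s. t \<in> T \<Longrightarrow> s \<in> T \<Longrightarrow> t < s \<Longrightarrow> b t \<le> a s"
  shows "countable T"
proof -
  have "\<forall>t\<in>T. \<exists>q\<in>\<rat>. a t < q \<and> q < b t"
    using nonempty Rats_dense_in_real by blast
  then obtain q where q: "\<And>t. t \<in> T \<Longrightarrow> q t \<in> \<rat> \<and> a t < q t \<and> q t < b t"
    by metis
  have "inj_on q T"
  proof (rule inj_onI, rule ccontr)
    fix t s assume ts: "t \<in> T" "s \<in> T" "q t = q s" "t \<noteq> s"
    show False
    proof (cases "t < s")
      case True
      then show False using q[OF ts(1)] q[OF ts(2)] ordered[OF ts(1,2)] ts(3) by force
    next
      case False
      then have "s < t" using ts(4) by auto
      then show False using q[OF ts(1)] q[OF ts(2)] ordered[OF ts(2,1)] ts(3) by force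
    qed
  qed
  moreover have "q ` T \<subseteq> \<rat>"
    using q by auto
  then have "countable (q ` T)"
    using countable_rat countable_subset by blast
  ultimately show ?thesis
    using countable_image_inj_on by blast
qed

lemma null_sets_lborel_if_countable_on_lines:
  fixes A :: "'a::euclidean_space set" and e :: 'a
  assumes A: "A \<in> sets borel"
    and lines: "\<And>x. countable {t::real. x + t *\<^sub>R e \<in> A}"
  shows "A \<in> null_sets lborel"
proof -
  define F where "F = (\<lambda>(x::'a) (t::real). indicator A (x + t *\<^sub>R e) * indicator {0..1} t :: ennreal)"
  have F_measurable: "case_prod F \<in> borel_measurable (lborel \<Otimes>\<^sub>M lborel)"
    unfolding F_def using A by measurable
  have "(\<integral>\<^sup>+ t. F x t \<partial>lborel) = 0" for x
  proof -
    have "AE t in lborel. t \<notin> {t. x + t *\<^sub>R e \<in> A}"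
      using lines countable_imp_null_set_lborel by (blast intro: AE_not_in)
    then have "AE t in lborel. F x t = 0"
      by eventually_elim (auto simp: F_def)
    then show ?thesis
      by (simp add: nn_integral_cong_AE)
  qed
  then have lines_first: "(\<integral>\<^sup>+ x. (\<integral>\<^sup>+ t. F x t \<partial>lborel) \<partial>lborel) = 0"
    by simp
  have translate: "(\<integral>\<^sup>+ x. indicator A (x + c) \<partial>lborel) = emeasure lborel A" for c :: 'a
  proof -
    have "(\<integral>\<^sup>+ x. indicator A (x + c) \<partial>lborel) = (\<integral>\<^sup>+ x. indicator A x \<partial>distr lborel borel ((+) c))"
      using A by (subst nn_integral_distr) (auto simp: add.commute)
    also have "\<dots> = emeasure lborel A"
      using A by (simp add: lborel_distr_plus)
    finally show ?thesis .
  qed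
  have "(\<integral>\<^sup>+ t. (\<integral>\<^sup>+ x. F x t \<partial>lborel) \<partial>lborel)
      = (\<integral>\<^sup>+ (t::real). emeasure lborel A * indicator {0..1} t \<partial>lborel)"
    unfolding F_def using A by (simp add: nn_integral_multc translate)
  also have "\<dots> = emeasure lborel A"
    by (simp add: nn_integral_cmult_indicator)
  finally have "emeasure lborel A = 0"
    using lborel_pair.Fubini'[OF F_measurable] lines_first by simp
  then show ?thesis
    using A by auto
qed

lemma AE_PiM_by_section:
  assumes M: "product_sigma_finite M" and I: "finite I" "k \<in> I"
    and measurable: "{X \<in> space (PiM I M). \<not> P X} \<in> sets (PiM I M)"
    and sections: "\<And>X. X \<in> space (PiM (I - {k}) M) \<Longrightarrow> AE y in M k. P (X(k := y))"
  shows "AE X in PiM I M. P X"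
proof -
  interpret product_sigma_finite M by (rule M)
  define S where "S = {X \<in> space (PiM I M). \<not> P X}"
  have I_insert: "I = insert k (I - {k})"
    using I by auto
  have "emeasure (PiM I M) S = (\<integral>\<^sup>+ X. indicator S X \<partial>PiM (insert k (I - {k})) M)"
    using measurable I_insert by (simp add: S_def)
  also have "\<dots> = (\<integral>\<^sup>+ X. (\<integral>\<^sup>+ y. indicator S (X(k := y)) \<partial>M k) \<partial>PiM (I - {k}) M)"
    using I measurable I_insert by (subst product_nn_integral_insert) (auto simp: S_def)
  also have "\<dots> = (\<integral>\<^sup>+ X. 0 \<partial>PiM (I - {k}) M)"
  proof (rule nn_integral_cong)
    fix X assume "X \<in> space (PiM (I - {k}) M)"
    then have "AE y in M k. P (X(k := y))"
      by (rule sections)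
    then have "AE y in M k. indicator S (X(k := y)) = (0::ennreal)"
      by eventually_elim (simp add: S_def)
    then show "(\<integral>\<^sup>+ y. indicator S (X(k := y)) \<partial>M k) = 0"
      by (simp add: nn_integral_cong_AE)
  qed
  finally have "S \<in> null_sets (PiM I M)"
    using measurable by (simp add: S_def null_sets_def)
  then show ?thesis
    by (rule AE_I') (simp add: S_def)
qed

section \<open>Ties between support points\<close>

definition support_point :: "'a::real_inner set \<Rightarrow> 'a \<Rightarrow> 'a \<Rightarrow> bool" where
  "support_point S x y \<longleftrightarrow> y \<in> S \<and> (\<forall>z\<in>S. x \<bullet> z \<le> x \<bullet> y)"

definition support_ties :: "'a::real_inner set \<Rightarrow> 'a set \<Rightarrow> real \<Rightarrow> 'a set" where
  "support_ties Sa Sb c = {x. \<exists>ya yb. support_point Sa x ya \<and> support_point Sb x yb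
      \<and> x \<bullet> ya - x \<bullet> yb = c \<and> ya \<noteq> yb}"

definition separated_ties :: "'a::real_inner set \<Rightarrow> 'a set \<Rightarrow> real \<Rightarrow> 'a \<Rightarrow> real \<Rightarrow> 'a set" where
  "separated_ties Sa Sb c e \<epsilon> = {x. \<exists>ya yb. support_point Sa x ya \<and> support_point Sb x yb
      \<and> x \<bullet> ya - x \<bullet> yb = c \<and> e \<bullet> ya + \<epsilon> \<le> e \<bullet> yb}"

lemma support_point_exists:
  assumes "compact S" "S \<noteq> {}"
  shows "\<exists>y. support_point S x y"
proof -
  have "continuous_on S (\<lambda>y. x \<bullet> y)"
    by (intro continuous_intros)
  then show ?thesis
    using continuous_attains_sup[OF assms] by (auto simp: support_point_def)
qed

lemma closed_separated_ties:
  fixes Sa Sb :: "'a::euclidean_space set"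
  assumes "compact Sa" "compact Sb"
  shows "closed (separated_ties Sa Sb c e \<epsilon>)"
proof -
  define T where "T = {(p :: 'a \<times> 'a, x :: 'a). (\<forall>z\<in>Sa. x \<bullet> z \<le> x \<bullet> fst p) \<and> (\<forall>z\<in>Sb. x \<bullet> z \<le> x \<bullet> snd p)
      \<and> x \<bullet> fst p - x \<bullet> snd p = c \<and> e \<bullet> fst p + \<epsilon> \<le> e \<bullet> snd p}"
  have "T = (\<Inter>z\<in>Sa. {q. snd q \<bullet> z \<le> snd q \<bullet> fst (fst q)}) \<inter> (\<Inter>z\<in>Sb. {q. snd q \<bullet> z \<le> snd q \<bullet> snd (fst q)})
     \<inter> {q. snd q \<bullet> fst (fst q) - snd q \<bullet> snd (fst q) = c} \<inter> {q. e \<bullet> fst (fst q) + \<epsilon> \<le> e \<bullet> snd (fst q)}"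
    unfolding T_def by auto
  then have "closed T"
    by (simp only:) (intro closed_Int closed_INT ballI closed_Collect_le closed_Collect_eq continuous_intros)
  moreover have "compact (Sa \<times> Sb)"
    using assms by (simp add: compact_Times)
  moreover have "separated_ties Sa Sb c e \<epsilon> = {x. \<exists>p. p \<in> Sa \<times> Sb \<and> (p, x) \<in> T}"
    unfolding separated_ties_def support_point_def T_def by auto
  ultimately show ?thesis
    using closed_compact_projection by (simp only:)
qed

text \<open>
  Moving \<open>x\<close> in direction \<open>e\<close> can only increase \<open>e\<bullet>y\<close> for the maximiser \<open>y\<close> of \<open>x\<bullet>\<cdot>\<close>, while
  the constraint \<open>x\<bullet>y\<^sub>a - x\<bullet>y\<^sub>b = c\<close> forces the intervals \<open>[e\<bullet>y\<^sub>a, e\<bullet>y\<^sub>b]\<close> of distinct points of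
  the line not to overlap.
\<close>
lemma countable_separated_ties_on_line:
  assumes "\<epsilon> > 0"
  shows "countable {t::real. x + t *\<^sub>R e \<in> separated_ties Sa Sb c e \<epsilon>}"
proof -
  define T where "T = {t::real. x + t *\<^sub>R e \<in> separated_ties Sa Sb c e \<epsilon>}"
  have "\<forall>t\<in>T. \<exists>ya yb. support_point Sa (x + t *\<^sub>R e) ya \<and> support_point Sb (x + t *\<^sub>R e) yb
      \<and> (x + t *\<^sub>R e) \<bullet> ya - (x + t *\<^sub>R e) \<bullet> yb = c \<and> e \<bullet> ya + \<epsilon> \<le> e \<bullet> yb"
    unfolding T_def separated_ties_def by blast
  then obtain ya yb where Y: "\<And>t. t \<in> T \<Longrightarrow> support_point Sa (x + t *\<^sub>R e) (ya t)
      \<and> support_point Sb (x + t *\<^sub>R e) (yb t)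
      \<and> (x + t *\<^sub>R e) \<bullet> ya t - (x + t *\<^sub>R e) \<bullet> yb t = c \<and> e \<bullet> ya t + \<epsilon> \<le> e \<bullet> yb t"
    by metis
  have "countable T"
  proof (rule countable_if_disjoint_intervals[of T "\<lambda>t. e \<bullet> ya t" "\<lambda>t. e \<bullet> yb t"])
    fix t assume "t \<in> T"
    then show "e \<bullet> ya t < e \<bullet> yb t"
      using Y[of t] assms by auto
  next
    fix t s assume ts: "t \<in> T" "s \<in> T" "t < s"
    have "(x + s *\<^sub>R e) \<bullet> yb t \<le> (x + s *\<^sub>R e) \<bullet> yb s"
      "(x + t *\<^sub>R e) \<bullet> ya s \<le> (x + t *\<^sub>R e) \<bullet> ya t"
      "(x + t *\<^sub>R e) \<bullet> ya t - (x + t *\<^sub>R e) \<bullet> yb t = (x + s *\<^sub>R e) \<bullet> ya s - (x + s *\<^sub>R e) \<bullet> yb s"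
      using Y[OF ts(1)] Y[OF ts(2)] by (simp_all add: support_point_def)
    then have "(s - t) * (e \<bullet> yb t) \<le> (s - t) * (e \<bullet> ya s)"
      by (simp add: inner_add_left algebra_simps)
    then show "e \<bullet> yb t \<le> e \<bullet> ya s"
      using ts(3) by simp
  qed
  then show ?thesis
    unfolding T_def .
qed

lemma separated_ties_null:
  fixes Sa Sb :: "'a::euclidean_space set"
  assumes "compact Sa" "compact Sb" "\<epsilon> > 0"
  shows "separated_ties Sa Sb c e \<epsilon> \<in> null_sets lborel"
  using closed_separated_ties[OF assms(1,2)] countable_separated_ties_on_line[OF assms(3)]
  by (intro null_sets_lborel_if_countable_on_lines[where e=e] borel_closed)

lemma support_ties_subset_separated_ties:
  "support_ties Sa Sb c \<subseteq>
     (\<Union>e\<in>Basis \<union> uminus ` Basis. \<Union>m::nat. separated_ties Sa Sb c e (1 / real (Suc m)))"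
proof
  fix x assume "x \<in> support_ties Sa Sb c"
  then obtain ya yb where Y: "support_point Sa x ya" "support_point Sb x yb"
      "x \<bullet> ya - x \<bullet> yb = c" "ya \<noteq> yb"
    unfolding support_ties_def by blast
  then obtain b :: 'a where b: "b \<in> Basis" "ya \<bullet> b \<noteq> yb \<bullet> b"
    using euclidean_eqI by metis
  define e where "e = (if ya \<bullet> b < yb \<bullet> b then b else - b)"
  have "e \<in> Basis \<union> uminus ` Basis"
    using b(1) by (simp add: e_def)
  moreover have "0 < e \<bullet> yb - e \<bullet> ya"
    using b(2) by (auto simp: e_def inner_commute)
  then obtain m where "inverse (real (Suc m)) < e \<bullet> yb - e \<bullet> ya"
    using reals_Archimedean by blast
  then have "e \<bullet> ya + 1 / real (Suc m) \<le> e \<bullet> yb"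
    by (simp add: divide_inverse)
  then have "x \<in> separated_ties Sa Sb c e (1 / real (Suc m))"
    unfolding separated_ties_def using Y by blast
  ultimately show "x \<in> (\<Union>e\<in>Basis \<union> uminus ` Basis. \<Union>m. separated_ties Sa Sb c e (1 / real (Suc m)))"
    by blast
qed

lemma AE_lborel_not_support_ties:
  fixes Sa Sb :: "'a::euclidean_space set"
  assumes "compact Sa" "compact Sb"
  shows "AE x in lborel. x \<notin> support_ties Sa Sb c"
proof (rule AE_I')
  show "(\<Union>e\<in>Basis \<union> uminus ` Basis. \<Union>m::nat. separated_ties Sa Sb c e (1 / real (Suc m)))
      \<in> null_sets lborel"
    using assms by (intro null_sets_UN' null_sets_UN separated_ties_null) (auto simp: countable_finite)
qed (use support_ties_subset_separated_ties[of Sa Sb c] in auto)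

section \<open>Orbits of a compact subgroup of the orthogonal group\<close>

lemma norm_orthogonal_matrix_vector_mul:
  "orthogonal_matrix Q \<Longrightarrow> norm (Q *v x) = norm (x::real^'n)"
  by (metis (no_types, lifting) dot_matrix_vector_mul matrix_vector_mul_lid norm_eq
      orthogonal_matrix_def orthogonal_matrix_id)

lemma transpose_orthogonal_matrix_vector_mul:
  "orthogonal_matrix Q \<Longrightarrow> transpose Q *v (Q *v x) = (x::real^'n)"
  unfolding orthogonal_matrix_def by (simp add: matrix_vector_mul_assoc)

text \<open>\<open>x v* Q\<close> is the simp normal form of \<open>transpose Q *v x\<close>.\<close>
lemma norm_vector_matrix_mul_orthogonal_diff:
  assumes Q: "orthogonal_matrix Q"
  shows "norm (x v* Q - h) = dist x (Q *v (h::real^'n))"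
proof -
  have "transpose Q *v x - h = transpose Q *v (x - Q *v h)"
    using Q by (simp add: matrix_vector_mult_diff_distrib matrix_vector_mul_assoc orthogonal_matrix_def)
  moreover have "orthogonal_matrix (transpose Q)"
    using Q by (simp add: orthogonal_matrix_transpose)
  ultimately have "norm (transpose Q *v x - h) = dist x (Q *v h)"
    unfolding dist_norm by (simp only: norm_orthogonal_matrix_vector_mul)
  then show ?thesis
    by simp
qed

lemma orbit_memI: "Q \<in> G \<Longrightarrow> Q *v h \<in> orbit G h"
  by (simp add: orbit_def)

context
  fixes G :: "(real^'n^'n) set"
  assumes G: "compact_orth_subgroup G"
begin

lemma orthogonal_matrix_of_subgroup: "Q \<in> G \<Longrightarrow> orthogonal_matrix Q"
  using G by (simp add: compact_orth_subgroup_def)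

lemma transpose_mult_in_subgroup: "Q \<in> G \<Longrightarrow> R \<in> G \<Longrightarrow> transpose Q ** R \<in> G"
  using G by (simp add: compact_orth_subgroup_def)

lemma compact_orbit: "compact (orbit G h)"
proof -
  have "continuous_on G (\<lambda>Q. Q *v h)"
    unfolding matrix_vector_mult_def by (intro continuous_intros)
  then show ?thesis
    using G unfolding orbit_def compact_orth_subgroup_def by (blast intro: compact_continuous_image)
qed

lemma orbit_nonempty: "orbit G h \<noteq> {}"
  using G by (auto simp: orbit_def compact_orth_subgroup_def)

lemma norm_orbit: "y \<in> orbit G h \<Longrightarrow> norm y = norm h"
  by (auto simp: orbit_def norm_orthogonal_matrix_vector_mul orthogonal_matrix_of_subgroup)

lemma orbits_disjoint:
  assumes "h' \<notin> orbit G h"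
  shows "orbit G h \<inter> orbit G h' = {}"
proof (rule ccontr)
  assume "orbit G h \<inter> orbit G h' \<noteq> {}"
  then obtain Q R where QR: "Q \<in> G" "R \<in> G" "Q *v h = R *v h'"
    by (auto simp: orbit_def)
  have "(transpose R ** Q) *v h = transpose R *v (R *v h')"
    using QR(3) by (simp add: matrix_vector_mul_assoc[symmetric])
  also have "\<dots> = h'"
    using QR(2) by (intro transpose_orthogonal_matrix_vector_mul orthogonal_matrix_of_subgroup)
  finally have "(transpose R ** Q) *v h = h'" .
  then show False
    using assms orbit_memI[OF transpose_mult_in_subgroup[OF QR(2,1)]] by metis
qed

lemma orbit_map_inj_if_free:
  assumes free: "\<forall>Q\<in>G. Q *v h = h \<longrightarrow> Q = mat 1"
    and Q: "Q \<in> G" and R: "R \<in> G" and eq: "Q *v h = R *v h"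
  shows "Q = R"
proof -
  have "(transpose R ** Q) *v h = transpose R *v (R *v h)"
    using eq by (simp add: matrix_vector_mul_assoc[symmetric])
  also have "\<dots> = h"
    using R by (intro transpose_orthogonal_matrix_vector_mul orthogonal_matrix_of_subgroup)
  finally have "(transpose R ** Q) *v h = h" .
  then have "transpose R ** Q = mat 1"
    using free transpose_mult_in_subgroup[OF R Q] by blast
  then have "R ** (transpose R ** Q) = R"
    by simp
  then show ?thesis
    using orthogonal_matrix_of_subgroup[OF R] by (simp add: matrix_mul_assoc orthogonal_matrix_def)
qed

lemma nearest_in_orbit_iff_support_point:
  "(y \<in> orbit G h \<and> (\<forall>z\<in>orbit G h. dist x y \<le> dist x z)) \<longleftrightarrow> support_point (orbit G h) x y"
proof -
  have "dist x y \<le> dist x z \<longleftrightarrow> x \<bullet> z \<le> x \<bullet> y" if "y \<in> orbit G h" "z \<in> orbit G h" for z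
  proof -
    have "y \<bullet> y = z \<bullet> z"
      using norm_orbit that by (metis power2_norm_eq_inner)
    then have "(dist x y)\<^sup>2 \<le> (dist x z)\<^sup>2 \<longleftrightarrow> x \<bullet> z \<le> x \<bullet> y"
      by (simp add: dist_norm power2_norm_eq_inner inner_diff_left inner_diff_right inner_commute)
    then show ?thesis
      by (simp add: power2_le_iff_abs_le)
  qed
  then show ?thesis
    unfolding support_point_def by blast
qed

lemma gcost_eq_dist_support_point:
  assumes "support_point (orbit G h) x y"
  shows "gcost G x h = (dist x y)\<^sup>2"
proof -
  have nearest: "y \<in> orbit G h" "\<And>z. z \<in> orbit G h \<Longrightarrow> dist x y \<le> dist x z"
    using assms nearest_in_orbit_iff_support_point by blast+
  have "gcost G x h = (INF z\<in>orbit G h. (dist x z)\<^sup>2)"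
    unfolding gcost_def orbit_def image_image
    by (intro INF_cong refl) (simp add: norm_vector_matrix_mul_orthogonal_diff orthogonal_matrix_of_subgroup)
  also have "\<dots> = (dist x y)\<^sup>2"
    using nearest by (intro cInf_eq_minimum) (auto intro: power_mono)
  finally show ?thesis .
qed

lemma gcost_eq_inner_support_point:
  assumes "support_point (orbit G h) x y"
  shows "gcost G x h = x \<bullet> x - 2 * (x \<bullet> y) + h \<bullet> h"
proof -
  have "y \<bullet> y = h \<bullet> h"
    using assms norm_orbit by (metis support_point_def power2_norm_eq_inner)
  then show ?thesis
    using gcost_eq_dist_support_point[OF assms]
    by (simp add: dist_norm power2_norm_eq_inner inner_diff_left inner_diff_right inner_commute)
qed

lemma gcost_eq_infdist: "gcost G x h = (infdist x (orbit G h))\<^sup>2"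
proof -
  obtain y where y: "support_point (orbit G h) x y"
    using support_point_exists[OF compact_orbit orbit_nonempty] by blast
  then have "y \<in> orbit G h" "\<forall>z\<in>orbit G h. dist x y \<le> dist x z"
    using nearest_in_orbit_iff_support_point by blast+
  then have "infdist x (orbit G h) = dist x y"
    using orbit_nonempty unfolding infdist_def by (auto intro!: cInf_eq_minimum)
  then show ?thesis
    using gcost_eq_dist_support_point[OF y] by simp
qed

lemma borel_measurable_gcost: "(\<lambda>x. gcost G x h) \<in> borel_measurable borel"
  unfolding gcost_eq_infdist by (intro borel_measurable_continuous_onI continuous_intros)

lemma unique_nearest_in_orbit:
  assumes "x \<notin> support_ties (orbit G h) (orbit G h) 0"
  shows "\<exists>!y. y \<in> orbit G h \<and> (\<forall>z\<in>orbit G h. dist x y \<le> dist x z)"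
proof -
  obtain y where y: "support_point (orbit G h) x y"
    using support_point_exists[OF compact_orbit orbit_nonempty] by blast
  have "y' = y" if y': "support_point (orbit G h) x y'" for y'
  proof -
    have "x \<bullet> y' \<le> x \<bullet> y" "x \<bullet> y \<le> x \<bullet> y'"
      using y y' by (simp_all add: support_point_def)
    then have "x \<bullet> y' - x \<bullet> y = 0"
      by linarith
    then show ?thesis
      using assms y y' unfolding support_ties_def by blast
  qed
  then show ?thesis
    using y unfolding nearest_in_orbit_iff_support_point by blast
qed

lemma unique_nearest_rotation_if_free:
  assumes free: "\<forall>Q\<in>G. Q *v h = h \<longrightarrow> Q = mat 1"
    and nearest: "\<exists>!y. y \<in> orbit G h \<and> (\<forall>z\<in>orbit G h. dist x y \<le> dist x z)"
  shows "\<exists>!Q. Q \<in> G \<and> (\<forall>Q'\<in>G. norm (transpose Q *v x - h) \<le> norm (transpose Q' *v x - h))"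
proof -
  have "\<forall>Q\<in>G. norm (transpose Q *v x - h) = dist x (Q *v h)"
    by (simp add: norm_vector_matrix_mul_orthogonal_diff orthogonal_matrix_of_subgroup)
  then have minimizer_iff: "(Q \<in> G \<and> (\<forall>Q'\<in>G. norm (transpose Q *v x - h) \<le> norm (transpose Q' *v x - h)))
      \<longleftrightarrow> Q \<in> G \<and> (\<forall>z\<in>orbit G h. dist x (Q *v h) \<le> dist x z)" for Q
    by (auto simp: orbit_def)
  show ?thesis
    unfolding minimizer_iff
  proof (rule ex_ex1I)
    obtain y where "y \<in> orbit G h" "\<forall>z\<in>orbit G h. dist x y \<le> dist x z"
      using nearest by blast
    then show "\<exists>Q. Q \<in> G \<and> (\<forall>z\<in>orbit G h. dist x (Q *v h) \<le> dist x z)"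
      by (auto simp: orbit_def)
  next
    fix Q R
    assume Q: "Q \<in> G \<and> (\<forall>z\<in>orbit G h. dist x (Q *v h) \<le> dist x z)"
      and R: "R \<in> G \<and> (\<forall>z\<in>orbit G h. dist x (R *v h) \<le> dist x z)"
    have "Q *v h = R *v h"
      using nearest orbit_memI Q R by blast
    then show "Q = R"
      using orbit_map_inj_if_free[OF free] Q R by blast
  qed
qed

lemma gcost_diff_ne_outside_support_ties:
  assumes "h' \<notin> orbit G h"
    and "x \<notin> support_ties (orbit G h) (orbit G h') ((h \<bullet> h - h' \<bullet> h' - r) / 2)"
  shows "gcost G x h - gcost G x h' \<noteq> r"
proof
  assume diff: "gcost G x h - gcost G x h' = r"
  obtain y y' where y: "support_point (orbit G h) x y" and y': "support_point (orbit G h') x y'"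
    using support_point_exists[OF compact_orbit orbit_nonempty] by metis
  have "y \<noteq> y'"
    using orbits_disjoint[OF assms(1)] y y' by (auto simp: support_point_def)
  moreover have "x \<bullet> y - x \<bullet> y' = (h \<bullet> h - h' \<bullet> h' - r) / 2"
    using diff gcost_eq_inner_support_point[OF y] gcost_eq_inner_support_point[OF y'] by simp
  ultimately show False
    using assms(2) y y' unfolding support_ties_def by blast
qed

end

section \<open>Almost sure statements\<close>

lemma AE_density_if_AE_lborel:
  assumes "has_lebesgue_density \<mu>" and "AE x in lborel. P x"
  shows "AE x in \<mu>. P x"
proof -
  obtain f where f: "f \<in> borel_measurable lborel" "\<mu> = density lborel f"
    using assms(1) unfolding has_lebesgue_density_def by blast
  show ?thesis
    using assms(2) f by (auto simp: AE_density elim: AE_mp)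
qed

lemma AE_unique_nearest_in_orbit:
  assumes "compact_orth_subgroup G" "has_lebesgue_density \<mu>"
  shows "AE x in \<mu>. \<exists>!y. y \<in> orbit G h \<and> (\<forall>z\<in>orbit G h. dist x y \<le> dist x z)"
  using AE_density_if_AE_lborel[OF assms(2)
      AE_lborel_not_support_ties[OF compact_orbit[OF assms(1)] compact_orbit[OF assms(1)]]]
  by eventually_elim (rule unique_nearest_in_orbit[OF assms(1)])

lemma AE_gcost_diff_ne:
  assumes G: "compact_orth_subgroup G" and \<mu>: "has_lebesgue_density \<mu>"
    and different_orbits: "h' \<notin> orbit G h"
  shows "AE y in \<mu>. gcost G y h - gcost G y h' \<noteq> r"
  using AE_density_if_AE_lborel[OF \<mu> AE_lborel_not_support_ties[OF compact_orbit[OF G] compact_orbit[OF G],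
        where c="(h \<bullet> h - h' \<bullet> h' - r) / 2"]]
  by eventually_elim (rule gcost_diff_ne_outside_support_ties[OF G different_orbits])

lemma AE_assignment_costs_differ:
  fixes G :: "(real^'p^'p) set" and h :: "nat \<Rightarrow> real^'p" and n :: nat
  assumes G: "compact_orth_subgroup G" and \<mu>: "prob_space \<mu>" "has_lebesgue_density \<mu>"
    and k: "k < n" and different_orbits: "h (\<beta> k) \<notin> orbit G (h (\<alpha> k))"
  shows "AE X in PiM {..<n} (\<lambda>_. \<mu>).
    (\<Sum>i<n. gcost G (X i) (h (\<alpha> i))) \<noteq> (\<Sum>i<n. gcost G (X i) (h (\<beta> i)))"
proof -
  define D where "D = (\<lambda>X i. gcost G (X i) (h (\<alpha> i)) - gcost G (X i) (h (\<beta> i)))"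
  have "sets \<mu> = sets borel"
    using \<mu>(2) by (auto simp: has_lebesgue_density_def)
  then have gcost_measurable: "(\<lambda>x. gcost G x h') \<in> borel_measurable \<mu>" for h'
    using borel_measurable_gcost[OF G] measurable_cong_sets by blast
  have "(\<lambda>X. \<Sum>i<n. D X i) \<in> borel_measurable (PiM {..<n} (\<lambda>_. \<mu>))"
    unfolding D_def
    by (intro borel_measurable_sum borel_measurable_diff
        measurable_compose[OF measurable_component_singleton[where I="{..<n}" and M="\<lambda>_. \<mu>"]
          gcost_measurable]) auto
  have "AE X in PiM {..<n} (\<lambda>_. \<mu>). (\<Sum>i<n. D X i) \<noteq> 0"
  proof (rule AE_PiM_by_section)
    show "product_sigma_finite (\<lambda>_. \<mu>)"
      using \<mu>(1) by (simp add: product_sigma_finite_def prob_space_imp_sigma_finite)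
    show "{X \<in> space (PiM {..<n} (\<lambda>_. \<mu>)). \<not> (\<Sum>i<n. D X i) \<noteq> 0} \<in> sets (PiM {..<n} (\<lambda>_. \<mu>))"
      using \<open>(\<lambda>X. \<Sum>i<n. D X i) \<in> borel_measurable _\<close> by measurable
    fix X assume "X \<in> space (PiM ({..<n} - {k}) (\<lambda>_. \<mu>))"
    define r where "r = - (\<Sum>i\<in>{..<n} - {k}. D X i)"
    have "(\<Sum>i<n. D (X(k := y)) i) = D (X(k := y)) k + (\<Sum>i\<in>{..<n} - {k}. D (X(k := y)) i)" for y
      using k by (subst sum.remove[of _ k]) auto
    moreover have "(\<Sum>i\<in>{..<n} - {k}. D (X(k := y)) i) = - r" for y
      unfolding r_def minus_minus by (intro sum.cong refl) (simp add: D_def)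
    moreover have "D (X(k := y)) k = gcost G y (h (\<alpha> k)) - gcost G y (h (\<beta> k))" for y
      by (simp add: D_def)
    ultimately have section_eq:
      "(\<Sum>i<n. D (X(k := y)) i) = gcost G y (h (\<alpha> k)) - gcost G y (h (\<beta> k)) - r" for y
      by simp
    show "AE y in \<mu>. (\<Sum>i<n. D (X(k := y)) i) \<noteq> 0"
      using AE_gcost_diff_ne[OF G \<mu>(2) different_orbits, of r]
      by eventually_elim (simp add: section_eq)
  qed (use k in auto)
  then show ?thesis
    by (simp add: D_def sum_subtractf)
qed

section \<open>Uniqueness of the optimal permutation\<close>

definition transport_cost ::
  "(real^'p^'p) set \<Rightarrow> nat \<Rightarrow> (nat \<Rightarrow> real^'p) \<Rightarrow> (nat \<Rightarrow> real^'p) \<Rightarrow> (nat \<Rightarrow> nat) \<Rightarrow> real" where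
  "transport_cost G n X h \<sigma> = (\<Sum>i<n. gcost G (X (\<sigma> i)) (h i))"

lemma transport_cost_permutes:
  assumes "\<sigma> permutes {..<n}"
  shows "transport_cost G n X h \<sigma> = (\<Sum>i<n. gcost G (X i) (h (inv \<sigma> i)))"
  unfolding transport_cost_def
  using sum.permute[OF permutes_inv[OF assms], of "\<lambda>i. gcost G (X (\<sigma> i)) (h i)"] assms
  by (simp add: permutes_inverses)

lemma ex1_optimal_perm_if_costs_distinct:
  assumes distinct: "inj_on (transport_cost G n X h) {\<sigma>. \<sigma> permutes {..<n}}"
  shows "\<exists>!\<sigma>. optimal_perm G n X h \<sigma>"
proof -
  let ?P = "{\<sigma>. \<sigma> permutes {..<n}}" and ?c = "transport_cost G n X h"
  have "finite (?c ` ?P)"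
    by (simp add: finite_permutations)
  moreover have "?c ` ?P \<noteq> {}"
    using permutes_id by blast
  ultimately obtain m where m: "m \<in> ?c ` ?P" "\<not> (\<exists>x\<in>?c ` ?P. x < m)"
    by (rule ex_min_if_finite[THEN bexE])
  obtain \<sigma> where \<sigma>: "\<sigma> \<in> ?P" "?c \<sigma> = m"
    using m(1) by blast
  have \<sigma>_min: "?c \<sigma> \<le> ?c \<tau>" if "\<tau> \<in> ?P" for \<tau>
    using m(2) \<sigma>(2) that by (simp add: not_less)
  have optimal_iff: "optimal_perm G n X h \<tau> \<longleftrightarrow> \<tau> \<in> ?P \<and> (\<forall>\<tau>'\<in>?P. ?c \<tau> \<le> ?c \<tau>')" for \<tau>
    by (simp add: optimal_perm_def transport_cost_def)
  show ?thesis
  proof (rule ex1I)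
    show "optimal_perm G n X h \<sigma>"
      unfolding optimal_iff using \<sigma>(1) \<sigma>_min by blast
    fix \<tau> assume "optimal_perm G n X h \<tau>"
    then have \<tau>: "\<tau> \<in> ?P" "?c \<tau> \<le> ?c \<sigma>"
      unfolding optimal_iff using \<sigma>(1) by blast+
    then have "?c \<tau> = ?c \<sigma>"
      using \<sigma>_min by (simp add: order_antisym)
    then show "\<tau> = \<sigma>"
      using inj_onD[OF distinct] \<tau>(1) \<sigma>(1) by blast
  qed
qed

lemma permutes_inv_differ:
  assumes "\<sigma> permutes {..<n}" "\<tau> permutes {..<n}" "\<sigma> \<noteq> \<tau>"
  obtains k where "k < n" "inv \<sigma> k \<noteq> inv \<tau> k"
proof -
  have "inv \<sigma> \<noteq> inv \<tau>"
    using assms by (metis permutes_inv_inv)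
  moreover have "inv \<sigma> k = inv \<tau> k" if "k \<notin> {..<n}" for k
    using that permutes_not_in[OF permutes_inv[OF assms(1)]] permutes_not_in[OF permutes_inv[OF assms(2)]]
    by metis
  ultimately show ?thesis
    using that by (meson ext lessThan_iff)
qed

lemma AE_transport_costs_distinct:
  fixes G :: "(real^'p^'p) set" and h :: "nat \<Rightarrow> real^'p"
  assumes G: "compact_orth_subgroup G" and \<mu>: "prob_space \<mu>" "has_lebesgue_density \<mu>"
    and distinct_orbits: "\<forall>i<n. \<forall>j<n. i \<noteq> j \<longrightarrow> h j \<notin> orbit G (h i)"
  shows "AE X in PiM {..<n} (\<lambda>_. \<mu>). inj_on (transport_cost G n X h) {\<sigma>. \<sigma> permutes {..<n}}"
proof -
  have "AE X in PiM {..<n} (\<lambda>_. \<mu>). \<sigma> \<noteq> \<tau> \<longrightarrow> transport_cost G n X h \<sigma> \<noteq> transport_cost G n X h \<tau>"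
    if \<sigma>: "\<sigma> permutes {..<n}" and \<tau>: "\<tau> permutes {..<n}" for \<sigma> \<tau>
  proof (cases "\<sigma> = \<tau>")
    case False
    then obtain k where k: "k < n" "inv \<sigma> k \<noteq> inv \<tau> k"
      using permutes_inv_differ[OF \<sigma> \<tau>] by blast
    have "inv \<sigma> k < n" "inv \<tau> k < n"
      using k(1) permutes_inv[OF \<sigma>] permutes_inv[OF \<tau>] by (meson lessThan_iff permutes_in_image)+
    then have "h (inv \<tau> k) \<notin> orbit G (h (inv \<sigma> k))"
      using distinct_orbits k(2) by blast
    from AE_assignment_costs_differ[where \<alpha>="inv \<sigma>" and \<beta>="inv \<tau>", OF G \<mu> k(1) this]
    show ?thesis
      by eventually_elim (simp add: transport_cost_permutes[OF \<sigma>] transport_cost_permutes[OF \<tau>])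
  qed simp
  then have "AE X in PiM {..<n} (\<lambda>_. \<mu>). \<forall>\<sigma>\<in>{\<sigma>. \<sigma> permutes {..<n}}. \<forall>\<tau>\<in>{\<tau>. \<tau> permutes {..<n}}.
      \<sigma> \<noteq> \<tau> \<longrightarrow> transport_cost G n X h \<sigma> \<noteq> transport_cost G n X h \<tau>"
    by (intro AE_finite_allI finite_permutations) auto
  then show ?thesis
    by eventually_elim (auto simp: inj_on_def)
qed

lemma AE_ex1_optimal_perm:
  fixes G :: "(real^'p^'p) set" and h :: "nat \<Rightarrow> real^'p"
  assumes "compact_orth_subgroup G" "prob_space \<mu>" "has_lebesgue_density \<mu>"
    and "\<forall>i<n. \<forall>j<n. i \<noteq> j \<longrightarrow> h j \<notin> orbit G (h i)"
  shows "AE X in PiM {..<n} (\<lambda>_. \<mu>). \<exists>!\<sigma>. optimal_perm G n X h \<sigma>"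
  using AE_transport_costs_distinct[OF assms]
  by eventually_elim (rule ex1_optimal_perm_if_costs_distinct)

lemma AE_PiM_unique_nearest_in_orbits:
  fixes G :: "(real^'p^'p) set" and h :: "nat \<Rightarrow> real^'p"
  assumes G: "compact_orth_subgroup G" and \<mu>: "prob_space \<mu>" "has_lebesgue_density \<mu>"
  shows "AE X in PiM {..<n} (\<lambda>_. \<mu>). \<forall>i<n. \<forall>j<n.
      \<exists>!y. y \<in> orbit G (h j) \<and> (\<forall>z\<in>orbit G (h j). dist (X i) y \<le> dist (X i) z)"
proof -
  have "AE X in PiM {..<n} (\<lambda>_. \<mu>). \<forall>i\<in>{..<n}. \<forall>j\<in>{..<n}.
      \<exists>!y. y \<in> orbit G (h j) \<and> (\<forall>z\<in>orbit G (h j). dist (X i) y \<le> dist (X i) z)"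
    using \<mu>(1) AE_unique_nearest_in_orbit[OF G \<mu>(2)]
    by (intro AE_finite_allI AE_PiM_component) auto
  then show ?thesis
    unfolding Ball_def lessThan_iff .
qed

lemma optimal_perm_in_range: "optimal_perm G n X h \<sigma> \<Longrightarrow> j < n \<Longrightarrow> \<sigma> j < n"
  using permutes_in_image[of \<sigma> "{..<n}" j] unfolding optimal_perm_def by simp

lemma AE_unique_ranks:
  fixes G :: "(real^'p^'p) set" and h :: "nat \<Rightarrow> real^'p"
  assumes G: "compact_orth_subgroup G" and \<mu>: "prob_space \<mu>" "has_lebesgue_density \<mu>"
    and distinct_orbits: "\<forall>i<n. \<forall>j<n. i \<noteq> j \<longrightarrow> h j \<notin> orbit G (h i)"
  shows "AE X in PiM {..<n} (\<lambda>_. \<mu>). (\<exists>!\<sigma>. optimal_perm G n X h \<sigma>) \<and>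
      (\<forall>\<sigma>. optimal_perm G n X h \<sigma> \<longrightarrow> (\<forall>j<n. \<exists>!y. y \<in> orbit G (h j) \<and>
         (\<forall>z\<in>orbit G (h j). dist (X (\<sigma> j)) y \<le> dist (X (\<sigma> j)) z)))"
  using AE_ex1_optimal_perm[OF G \<mu> distinct_orbits] AE_PiM_unique_nearest_in_orbits[OF G \<mu>, of n h]
proof eventually_elim
  case (elim X)
  show ?case
  proof (intro conjI allI impI)
    fix \<sigma> j assume \<sigma>: "optimal_perm G n X h \<sigma>" and j: "j < n"
    show "\<exists>!y. y \<in> orbit G (h j) \<and> (\<forall>z\<in>orbit G (h j). dist (X (\<sigma> j)) y \<le> dist (X (\<sigma> j)) z)"
      by (rule elim(2)[rule_format, OF optimal_perm_in_range[OF \<sigma> j] j])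
  qed (rule elim(1))
qed

lemma AE_unique_signs:
  fixes G :: "(real^'p^'p) set" and h :: "nat \<Rightarrow> real^'p"
  assumes G: "compact_orth_subgroup G" and \<mu>: "prob_space \<mu>" "has_lebesgue_density \<mu>"
    and B: "\<forall>j<n. h j \<in> B" and free: "\<forall>y\<in>B. \<forall>Q\<in>G. Q *v y = y \<longrightarrow> Q = mat 1"
  shows "AE X in PiM {..<n} (\<lambda>_. \<mu>). \<forall>\<sigma>. optimal_perm G n X h \<sigma> \<longrightarrow> (\<forall>j<n. \<exists>!Q. Q \<in> G \<and>
      (\<forall>Q'\<in>G. norm (transpose Q *v X (\<sigma> j) - h j) \<le> norm (transpose Q' *v X (\<sigma> j) - h j)))"
  using AE_PiM_unique_nearest_in_orbits[OF G \<mu>, of n h]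
proof eventually_elim
  case (elim X)
  show ?case
  proof (intro allI impI)
    fix \<sigma> j assume \<sigma>: "optimal_perm G n X h \<sigma>" and j: "j < n"
    have "\<forall>Q\<in>G. Q *v h j = h j \<longrightarrow> Q = mat 1"
      using B free j by blast
    then show "\<exists>!Q. Q \<in> G \<and>
        (\<forall>Q'\<in>G. norm (transpose Q *v X (\<sigma> j) - h j) \<le> norm (transpose Q' *v X (\<sigma> j) - h j))"
      by (rule unique_nearest_rotation_if_free[OF G _ elim[rule_format, OF optimal_perm_in_range[OF \<sigma> j] j]])
  qed
qed

theorem mainTheorem1:
  fixes G :: "(real^'p^'p) set"
    and \<mu> :: "(real^'p) measure"
    and n :: nat
    and h :: "nat \<Rightarrow> real^'p"
  assumes G: "compact_orth_subgroup G"
    and mu_prob: "prob_space \<mu>"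
    and mu_ac: "has_lebesgue_density \<mu>"
    and distinct_orbits: "\<forall>i<n. \<forall>j<n. i \<noteq> j \<longrightarrow> h j \<notin> orbit G (h i)"
  shows
    "(AE X in PiM {..<n} (\<lambda>_. \<mu>).
        (\<exists>!\<sigma>. optimal_perm G n X h \<sigma>) \<and>
        (\<forall>\<sigma>. optimal_perm G n X h \<sigma> \<longrightarrow>
           (\<forall>j<n. \<exists>!y. y \<in> orbit G (h j) \<and>
               (\<forall>z\<in>orbit G (h j). dist (X (\<sigma> j)) y \<le> dist (X (\<sigma> j)) z))))
    \<and>
    (\<forall>B. (\<forall>j<n. h j \<in> B) \<longrightarrow>
        (\<forall>y\<in>B. \<forall>Q\<in>G. Q *v y = y \<longrightarrow> Q = mat 1) \<longrightarrow>
        (AE X in PiM {..<n} (\<lambda>_. \<mu>).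
          (\<forall>\<sigma>. optimal_perm G n X h \<sigma> \<longrightarrow>
             (\<forall>j<n. \<exists>!Q. Q \<in> G \<and>
                (\<forall>Q'\<in>G. norm (transpose Q *v X (\<sigma> j) - h j)
                          \<le> norm (transpose Q' *v X (\<sigma> j) - h j))))))"
  by (intro conjI allI impI AE_unique_ranks[OF G mu_prob mu_ac distinct_orbits])
    (rule AE_unique_signs[OF G mu_prob mu_ac]; assumption)

end
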